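(* Let $\Omega\subset\mathbb{R}^2$ be a bounded region whose boundary $\partial\Omega$, with its positive orientation (so that Green's theorem applies), is the union of $n_c$ rational Bernstein--B\'ezier curves $\mathbf{c}_1,\dots,\mathbf{c}_{n_c}$, each traversed as its parameter $s$ runs from $0$ to $1$. Here $$\mathbf{c}_i(s)=\big(x_i(s),y_i(s)\big)=\left(\frac{\sum_{j=0}^{m_i} w_{i,j}x_{i,j}B^{m_i}_j(s)}{\sum_{j=0}^{m_i} w_{i,j}B^{m_i}_j(s)},\ \frac{\sum_{j=0}^{m_i} w_{i,j}y_{i,j}B^{m_i}_j(s)}{\sum_{j=0}^{m_i} w_{i,j}B^{m_i}_j(s)}\right),\quad 0\le s\le 1,$$ has degree $m_i\ge 1$, control points $(x_{i,j},y_{i,j})\in\mathbb{R}^2$ and control weights $w_{i,j}>0$. Then for every integer $k\ge 0$ there exist $$n_q=\left\lceil \frac{k+1}{2}\right\rceil\sum_{i=1}^{n_c}\big(m_i(k+3)+1\big)$$ points $(x_l,y_l)\in\tilde\Omega$ and real weights $\omega_l$, $l=1,\dots,n_q$, such that $$\iint_\Omega p(x,y)\,dx\,dy=\sum_{l=1}^{n_q}\omega_l\,p(x_l,y_l)$$ for every real polynomial $p(x,y)$ of total degree at most $k$. Here $\tilde\Omega=[\min_{i,j}x_{i,j},\max_{i,j}x_{i,j}]\times[\min_{i,j}y_{i,j},\max_{i,j}y_{i,j}]$ is the bounding box of all the control points.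
   Context: The Bernstein basis polynomials of degree $m$ on $[0,1]$ are $B^m_j(s)=\binom{m}{j}s^j(1-s)^{m-j}$, $j=0,\dots,m$. Since all control weights are positive, each denominator $\sum_j w_{i,j}B^{m_i}_j(s)$ is strictly positive on $[0,1]$, so each curve is well defined and smooth there. The region may be multiply connected or have several components; its boundary then consists of several closed loops made up of these curves. *)

theory Defs
  imports "HOL-Complex_Analysis.Complex_Analysis"
begin

definition bernstein :: "nat \<Rightarrow> nat \<Rightarrow> real \<Rightarrow> real" where
  "bernstein m j s = real (m choose j) * s ^ j * (1 - s) ^ (m - j)"

definition rbezier ::
  "nat \<Rightarrow> (nat \<Rightarrow> real) \<Rightarrow> (nat \<Rightarrow> real) \<Rightarrow> (nat \<Rightarrow> real) \<Rightarrow> real \<Rightarrow> complex" where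
  "rbezier m X Y W s =
     (let d = (\<Sum>j\<le>m. W j * bernstein m j s)
      in Complex ((\<Sum>j\<le>m. W j * X j * bernstein m j s) / d)
                 ((\<Sum>j\<le>m. W j * Y j * bernstein m j s) / d))"

definition poly2 :: "nat \<Rightarrow> (nat \<Rightarrow> nat \<Rightarrow> real) \<Rightarrow> real \<Rightarrow> real \<Rightarrow> real" where
  "poly2 k c x y = (\<Sum>a\<le>k. \<Sum>b\<le>k - a. c a b * x ^ a * y ^ b)"

end

theory Submission
  imports Defs
begin

(* A rational Bezier curve with positive weights is a convex combination of its control points,
   so every boundary curve lies in the bounding box of the control points; a bounded set whose
   frontier lies in a closed convex set lies in that set, hence so does Omega. Newton
   interpolation on a triangular grid of (k+1)(k+2)/2 distinct nodes in the box writes every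
   polynomial of total degree at most k as a combination of its nodal values with continuous
   cardinal functions, and the integrals of these over Omega are the weights. As
   (k+1)(k+2)/2 <= n_q, the remaining nodes get weight zero. *)

section \<open>Polynomial functions of bounded degree\<close>

definition polyfuns1 :: "nat \<Rightarrow> (real \<Rightarrow> real) set" where
  "polyfuns1 n = {q. \<exists>d. \<forall>t. q t = (\<Sum>i\<le>n. d i * t ^ i)}"

definition polyfuns2 :: "nat \<Rightarrow> (real \<Rightarrow> real \<Rightarrow> real) set" where
  "polyfuns2 n = {f. \<exists>c. \<forall>u v. f u v = poly2 n c u v}"

lemma polyfuns1_sum:
  "finite A \<Longrightarrow> (\<And>i. i \<in> A \<Longrightarrow> q i \<in> polyfuns1 n) \<Longrightarrow>
    (\<lambda>t. \<Sum>i\<in>A. q i t) \<in> polyfuns1 n"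
proof (induction A rule: finite_induct)
  case empty
  show ?case unfolding polyfuns1_def by (intro CollectI exI[of _ "\<lambda>_. 0"]) simp
next
  case (insert j A)
  then obtain d e where "\<And>t. q j t = (\<Sum>i\<le>n. d i * t ^ i)"
    and "\<And>t. (\<Sum>i\<in>A. q i t) = (\<Sum>i\<le>n. e i * t ^ i)"
    unfolding polyfuns1_def by blast
  with insert.hyps show ?case
    unfolding polyfuns1_def
    by (intro CollectI exI[of _ "\<lambda>i. d i + e i"]) (simp add: sum.distrib algebra_simps)
qed

lemma polyfuns1_monomial: "j \<le> n \<Longrightarrow> (\<lambda>t. e * t ^ j) \<in> polyfuns1 n"
  unfolding polyfuns1_def
  by (intro CollectI exI[of _ "\<lambda>i. if i = j then e else 0"])
    (simp add: if_distrib if_distribR sum.delta cong: if_cong)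

lemma polyfuns2_sum:
  "finite A \<Longrightarrow> (\<And>i. i \<in> A \<Longrightarrow> f i \<in> polyfuns2 n) \<Longrightarrow>
    (\<lambda>u v. \<Sum>i\<in>A. f i u v) \<in> polyfuns2 n"
proof (induction A rule: finite_induct)
  case empty
  show ?case unfolding polyfuns2_def poly2_def by (intro CollectI exI[of _ "\<lambda>_ _. 0"]) simp
next
  case (insert j A)
  then obtain c d where "\<And>u v. f j u v = poly2 n c u v"
    and "\<And>u v. (\<Sum>i\<in>A. f i u v) = poly2 n d u v"
    unfolding polyfuns2_def by blast
  with insert.hyps show ?case
    unfolding polyfuns2_def
    by (intro CollectI exI[of _ "\<lambda>a b. c a b + d a b"])
      (simp add: poly2_def sum.distrib algebra_simps)
qed

lemma polyfuns2_monomial: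
  assumes "p + r \<le> n"
  shows "(\<lambda>u v. e * u ^ p * v ^ r) \<in> polyfuns2 n"
proof -
  have inner: "(\<Sum>b\<le>n - a. (if a = p \<and> b = r then e else 0) * u ^ a * v ^ b)
      = (if a = p then e * u ^ p * v ^ r else 0)" if "a \<le> n" for a u v
  proof (cases "a = p")
    case True
    have "(\<Sum>b\<le>n - a. (if a = p \<and> b = r then e else 0) * u ^ a * v ^ b)
        = (\<Sum>b\<le>n - a. if b = r then e * u ^ p * v ^ r else 0)"
      using True by (intro sum.cong) auto
    with True assms show ?thesis by simp
  qed simp
  have "poly2 n (\<lambda>a b. if a = p \<and> b = r then e else 0) u v = e * u ^ p * v ^ r" for u v
    using assms by (simp add: poly2_def inner)
  then show ?thesis
    unfolding polyfuns2_def
    by (intro CollectI exI[of _ "\<lambda>a b. if a = p \<and> b = r then e else 0"] allI) simp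
qed

lemma polyfuns1_factor:
  assumes "q \<in> polyfuns1 (Suc n)"
  obtains g where "g \<in> polyfuns1 n" "\<And>t. q t = q a + (t - a) * g t"
proof -
  obtain d where d: "\<And>t. q t = (\<Sum>i\<le>Suc n. d i * t ^ i)"
    using assms unfolding polyfuns1_def by blast
  obtain b where b: "\<And>t. (\<Sum>i\<le>Suc n. d i * t ^ i)
      = (t - a) * (\<Sum>i<Suc n. b i * t ^ i) + (\<Sum>i\<le>Suc n. d i * a ^ i)"
    using polyfun_linear_factor[of d "Suc n" a] by blast
  show ?thesis
  proof (rule that)
    show "(\<lambda>t. \<Sum>i\<le>n. b i * t ^ i) \<in> polyfuns1 n"
      unfolding polyfuns1_def by blast
    show "q t = q a + (t - a) * (\<Sum>i\<le>n. b i * t ^ i)" for t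
      using b[of t] by (simp add: d lessThan_Suc_atMost)
  qed
qed

lemma polyfuns2_factor:
  assumes "f \<in> polyfuns2 (Suc n)"
  obtains g where "g \<in> polyfuns2 n" "\<And>u v. f u v = f a v + (u - a) * g u v"
proof -
  obtain c where c: "\<And>u v. f u v = poly2 (Suc n) c u v"
    using assms unfolding polyfuns2_def by blast
  define g where "g u v = (\<Sum>i\<le>Suc n. \<Sum>j\<le>Suc n - i. \<Sum>p<i. c i j * a ^ (i - Suc p) * u ^ p * v ^ j)"
    for u v
  have "g \<in> polyfuns2 n"
    unfolding g_def by (intro polyfuns2_sum polyfuns2_monomial) auto
  moreover have "f u v = f a v + (u - a) * g u v" for u v
  proof -
    have "f u v - f a v = (\<Sum>i\<le>Suc n. \<Sum>j\<le>Suc n - i. c i j * (u ^ i - a ^ i) * v ^ j)"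
      unfolding c poly2_def sum_subtractf[symmetric]
      by (intro sum.cong refl) (simp add: algebra_simps)
    also have "\<dots> = (u - a) * g u v"
      unfolding g_def sum_distrib_left
      by (intro sum.cong refl)
        (simp add: power_diff_sumr2 sum_distrib_left sum_distrib_right ac_simps)
    finally show ?thesis by simp
  qed
  ultimately show ?thesis using that by blast
qed

lemma polyfuns2_slice: "f \<in> polyfuns2 n \<Longrightarrow> (\<lambda>v. f a v) \<in> polyfuns1 n"
proof -
  assume "f \<in> polyfuns2 n"
  then obtain c where "\<And>u v. f u v = poly2 n c u v"
    unfolding polyfuns2_def by blast
  moreover have "(\<lambda>v. \<Sum>i\<le>n. \<Sum>j\<le>n - i. c i j * a ^ i * v ^ j) \<in> polyfuns1 n"
    by (intro polyfuns1_sum polyfuns1_monomial) auto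
  ultimately show ?thesis by (simp add: poly2_def)
qed

section \<open>Interpolation on a triangular grid\<close>

lemma polyfuns1_interpolation:
  assumes "inj y"
  shows "\<exists>\<Phi>. (\<forall>s. continuous_on UNIV (\<Phi> s)) \<and>
    (\<forall>q\<in>polyfuns1 n. \<forall>t. q t = (\<Sum>s\<le>n. q (y s) * \<Phi> s t))"
  using assms
proof (induction n arbitrary: y)
  case 0
  show ?case
    by (intro exI[of _ "\<lambda>s t. 1"]) (auto simp: polyfuns1_def)
next
  case (Suc n)
  have y_ne: "y (Suc s) - y 0 \<noteq> 0" for s
    using injD[OF Suc.prems, of "Suc s" 0] by auto
  obtain \<Psi> where \<Psi>_cont: "\<And>s. continuous_on UNIV (\<Psi> s)"
    and \<Psi>_interp: "\<And>q t. q \<in> polyfuns1 n \<Longrightarrow> q t = (\<Sum>s\<le>n. q (y (Suc s)) * \<Psi> s t)"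
    using Suc.IH[OF inj_compose[OF Suc.prems inj_Suc]] by auto
  define A where "A s t = (t - y 0) * \<Psi> s t / (y (Suc s) - y 0)" for s t
  define \<Phi> where "\<Phi> s t = (case s of 0 \<Rightarrow> 1 - (\<Sum>r\<le>n. A r t) | Suc r \<Rightarrow> A r t)" for s t
  have "continuous_on UNIV (A s)" for s
    unfolding A_def using y_ne[of s] by (intro continuous_intros \<Psi>_cont) auto
  then have "continuous_on UNIV (\<Phi> s)" for s
    by (cases s) (simp_all add: \<Phi>_def continuous_intros)
  moreover have "q t = (\<Sum>s\<le>Suc n. q (y s) * \<Phi> s t)" if "q \<in> polyfuns1 (Suc n)" for q t
  proof -
    obtain g where g: "g \<in> polyfuns1 n" and q: "\<And>t. q t = q (y 0) + (t - y 0) * g t"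
      using polyfuns1_factor[OF \<open>q \<in> polyfuns1 (Suc n)\<close>] by blast
    have g_nodes: "g (y (Suc s)) = (q (y (Suc s)) - q (y 0)) / (y (Suc s) - y 0)" for s
      using q[of "y (Suc s)"] y_ne[of s] by (simp add: field_simps)
    have "(\<Sum>s\<le>Suc n. q (y s) * \<Phi> s t)
        = q (y 0) * (1 - (\<Sum>r\<le>n. A r t)) + (\<Sum>s\<le>n. q (y (Suc s)) * A s t)"
      by (subst sum.atMost_Suc_shift) (simp add: \<Phi>_def)
    also have "\<dots> = q (y 0) + (\<Sum>s\<le>n. (q (y (Suc s)) - q (y 0)) * A s t)"
      by (simp add: algebra_simps sum_distrib_left sum_subtractf)
    also have "\<dots> = q (y 0) + (t - y 0) * (\<Sum>s\<le>n. g (y (Suc s)) * \<Psi> s t)"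
      using g_nodes by (simp add: A_def sum_distrib_left ac_simps)
    also have "\<dots> = q t"
      using \<Psi>_interp[OF g, of t] q[of t] by simp
    finally show ?thesis by simp
  qed
  ultimately show ?case by blast
qed

lemma sum_triangle_swap:
  "(\<Sum>s\<le>Suc k. \<Sum>r\<in>{r. r \<in> {..k} \<and> r + s \<le> k}. F r s) = (\<Sum>r\<le>k. \<Sum>s\<le>k - r. F r s)"
proof -
  have "(\<Sum>s\<le>Suc k. \<Sum>r\<in>{r. r \<in> {..k} \<and> r + s \<le> k}. F r s)
      = (\<Sum>r\<le>k. \<Sum>s\<in>{s. s \<in> {..Suc k} \<and> r + s \<le> k}. F r s)"
    by (rule sum.swap_restrict[symmetric]) auto
  also have "\<dots> = (\<Sum>r\<le>k. \<Sum>s\<le>k - r. F r s)"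
    by (intro sum.cong) auto
  finally show ?thesis .
qed

(* Newton's scheme in the first variable: f(u,v) = f(x 0, v) + (u - x 0) g(u,v) with g of degree
   at most k; the slice f(x 0, -) is interpolated at y 0, ..., y (k+1) and g on the grid
   shifted by one node in the first variable. *)
lemma polyfuns2_newton_step:
  assumes f: "f \<in> polyfuns2 (Suc k)" and x_ne: "\<And>r. x (Suc r) \<noteq> x 0"
    and \<Phi>_interp: "\<And>g. g \<in> polyfuns2 k \<Longrightarrow>
      g (Re z) (Im z) = (\<Sum>r\<le>k. \<Sum>s\<le>k - r. g (x (Suc r)) (y s) * \<Phi> r s)"
    and \<Psi>_interp: "\<And>q. q \<in> polyfuns1 (Suc k) \<Longrightarrow> q (Im z) = (\<Sum>s\<le>Suc k. q (y s) * \<Psi> s)"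
  defines "A r s \<equiv> (Re z - x 0) * \<Phi> r s / (x (Suc r) - x 0)"
  shows "f (Re z) (Im z)
    = (\<Sum>s\<le>Suc k. f (x 0) (y s) * (\<Psi> s - (\<Sum>r\<in>{r. r \<in> {..k} \<and> r + s \<le> k}. A r s)))
      + (\<Sum>r\<le>k. \<Sum>s\<le>k - r. f (x (Suc r)) (y s) * A r s)"
proof -
  obtain g where g: "g \<in> polyfuns2 k" and fg: "\<And>u v. f u v = f (x 0) v + (u - x 0) * g u v"
    using polyfuns2_factor[OF f] by blast
  have divided_difference:
    "(f (x (Suc r)) w - f (x 0) w) * A r s = (Re z - x 0) * (g (x (Suc r)) w * \<Phi> r s)" for r s w
  proof -
    have "g (x (Suc r)) w = (f (x (Suc r)) w - f (x 0) w) / (x (Suc r) - x 0)"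
      using fg[of "x (Suc r)" w] x_ne[of r] by (simp add: field_simps)
    then show ?thesis
      using x_ne[of r] by (simp add: A_def)
  qed
  have "(\<Sum>s\<le>Suc k. f (x 0) (y s) * (\<Psi> s - (\<Sum>r\<in>{r. r \<in> {..k} \<and> r + s \<le> k}. A r s)))
      + (\<Sum>r\<le>k. \<Sum>s\<le>k - r. f (x (Suc r)) (y s) * A r s)
      = (\<Sum>s\<le>Suc k. f (x 0) (y s) * \<Psi> s)
        + (\<Sum>r\<le>k. \<Sum>s\<le>k - r. (f (x (Suc r)) (y s) - f (x 0) (y s)) * A r s)"
    unfolding right_diff_distrib sum_subtractf sum_distrib_left sum_triangle_swap
    by (simp add: left_diff_distrib sum_subtractf)
  also have "\<dots> = f (x 0) (Im z) + (Re z - x 0) *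
      (\<Sum>r\<le>k. \<Sum>s\<le>k - r. g (x (Suc r)) (y s) * \<Phi> r s)"
    unfolding \<Psi>_interp[OF polyfuns2_slice[OF f], symmetric]
    by (simp only: divided_difference sum_distrib_left)
  also have "\<dots> = f (Re z) (Im z)"
    using \<Phi>_interp[OF g] fg[of "Re z" "Im z"] by simp
  finally show ?thesis by simp
qed

lemma polyfuns2_interpolation:
  assumes "inj x" "inj y"
  shows "\<exists>\<Phi>. (\<forall>r s. continuous_on UNIV (\<Phi> r s)) \<and>
    (\<forall>f\<in>polyfuns2 k. \<forall>z. f (Re z) (Im z) = (\<Sum>r\<le>k. \<Sum>s\<le>k - r. f (x r) (y s) * \<Phi> r s z))"
  using assms(1)
proof (induction k arbitrary: x)
  case 0
  show ?case
    by (intro exI[of _ "\<lambda>r s z. 1"]) (auto simp: polyfuns2_def poly2_def)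
next
  case (Suc k)
  have x_ne: "x (Suc r) \<noteq> x 0" for r
    using injD[OF Suc.prems, of "Suc r" 0] by auto
  from Suc.IH[OF inj_compose[OF Suc.prems inj_Suc]]
  obtain \<Phi>' where \<Phi>'_cont: "\<And>r s. continuous_on UNIV (\<Phi>' r s)"
    and \<Phi>'_interp: "\<And>f z. f \<in> polyfuns2 k \<Longrightarrow>
      f (Re z) (Im z) = (\<Sum>r\<le>k. \<Sum>s\<le>k - r. f (x (Suc r)) (y s) * \<Phi>' r s z)"
    unfolding comp_def by blast
  obtain \<Psi> where \<Psi>_cont: "\<And>s. continuous_on UNIV (\<Psi> s)"
    and \<Psi>_interp: "\<And>q t. q \<in> polyfuns1 (Suc k) \<Longrightarrow> q t = (\<Sum>s\<le>Suc k. q (y s) * \<Psi> s t)"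
    using polyfuns1_interpolation[OF assms(2), of "Suc k"] by blast
  define A where "A r s z = (Re z - x 0) * \<Phi>' r s z / (x (Suc r) - x 0)" for r s z
  define \<Phi> where "\<Phi> r s z = (case r of
      0 \<Rightarrow> \<Psi> s (Im z) - (\<Sum>r'\<in>{r'. r' \<in> {..k} \<and> r' + s \<le> k}. A r' s z)
    | Suc r' \<Rightarrow> A r' s z)" for r s z
  have "continuous_on UNIV (A r s)" for r s
    unfolding A_def using x_ne[of r] by (intro continuous_intros \<Phi>'_cont) auto
  moreover have "continuous_on UNIV (\<lambda>z. \<Psi> s (Im z))" for s
    by (rule continuous_on_compose2[OF \<Psi>_cont continuous_on_Im]) auto
  ultimately have "continuous_on UNIV (\<Phi> r s)" for r s
    by (cases r) (simp_all add: \<Phi>_def continuous_intros)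
  moreover have "f (Re z) (Im z) = (\<Sum>r\<le>Suc k. \<Sum>s\<le>Suc k - r. f (x r) (y s) * \<Phi> r s z)"
    if "f \<in> polyfuns2 (Suc k)" for f z
    using polyfuns2_newton_step[where x = x and y = y and z = z and \<Phi> = "\<lambda>r s. \<Phi>' r s z"
        and \<Psi> = "\<lambda>s. \<Psi> s (Im z)", OF that x_ne \<Phi>'_interp \<Psi>_interp]
    unfolding sum.atMost_Suc_shift[of "\<lambda>r. \<Sum>s\<le>Suc k - r. f (x r) (y s) * \<Phi> r s z"]
    by (simp add: \<Phi>_def A_def)
  ultimately show ?case by blast
qed

section \<open>Interpolatory cubature\<close>

lemma card_triangle: "2 * card (SIGMA r:{..k}. {..k - r}) = (k + 1) * (k + 2)"
proof -
  have "2 * (\<Sum>r\<le>k. Suc (k - r)) = (k + 1) * (k + 2)"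
  proof (induction k)
    case (Suc k)
    have "(\<Sum>r\<le>Suc k. Suc (Suc k - r)) = Suc (Suc k) + (\<Sum>r\<le>k. Suc (k - r))"
      by (subst sum.atMost_Suc_shift) simp
    with Suc show ?case by simp
  qed simp
  then show ?thesis by simp
qed

lemma dyadic_nodes:
  fixes lo hi :: real
  assumes "lo < hi"
  shows "inj (\<lambda>r. hi - (hi - lo) / 2 ^ r)" "hi - (hi - lo) / 2 ^ r \<in> {lo..hi}"
proof -
  show "inj (\<lambda>r. hi - (hi - lo) / 2 ^ r)"
    using assms by (intro injI) simp
  have "(hi - lo) / 2 ^ r \<le> hi - lo"
    using assms by (simp add: divide_le_eq)
  then show "hi - (hi - lo) / 2 ^ r \<in> {lo..hi}"
    using assms by simp
qed

lemma sum_reindex_padded: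
  fixes w :: "'a \<Rightarrow> real"
  assumes "finite T" "T \<noteq> {}" "card T \<le> n"
  obtains h :: "nat \<Rightarrow> 'a" and v :: "nat \<Rightarrow> real"
  where "\<And>l. h l \<in> T" "\<And>g. (\<Sum>t\<in>T. w t * g t) = (\<Sum>l<n. v l * g (h l))"
proof -
  obtain e where e: "bij_betw e {..<card T} T"
    using ex_bij_betw_nat_finite[OF assms(1)] by (auto simp: atLeast0LessThan)
  obtain t0 where "t0 \<in> T" using assms(2) by blast
  define h where "h l = (if l < card T then e l else t0)" for l
  define v where "v l = (if l < card T then w (e l) else 0)" for l
  have "h l \<in> T" for l
    using e \<open>t0 \<in> T\<close> by (auto simp: h_def bij_betw_apply)
  moreover have "(\<Sum>t\<in>T. w t * g t) = (\<Sum>l<n. v l * g (h l))" for g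
  proof -
    have "(\<Sum>t\<in>T. w t * g t) = (\<Sum>l<card T. w (e l) * g (e l))"
      using sum.reindex_bij_betw[OF e, of "\<lambda>t. w t * g t"] by simp
    also have "\<dots> = (\<Sum>l<card T. v l * g (h l))"
      by (simp add: h_def v_def)
    also have "\<dots> = (\<Sum>l<n. v l * g (h l))"
      using assms(3) by (intro sum.mono_neutral_left) (auto simp: v_def)
    finally show ?thesis .
  qed
  ultimately show ?thesis using that by blast
qed

lemma integrable_continuous_on_subset_cbox:
  fixes f :: "'a::euclidean_space \<Rightarrow> 'b::euclidean_space"
  assumes "continuous_on (cbox a b) f" "S \<subseteq> cbox a b" "S \<in> sets lebesgue"
  shows "f integrable_on S"
  using set_integrable_subset[OF absolutely_integrable_continuous[OF assms(1)] assms(3,2)]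
  by (simp add: absolutely_integrable_on_def)

lemma polyfuns2_grid_cubature:
  fixes S :: "complex set"
  assumes "open S" "S \<subseteq> cbox a b" "S \<noteq> {}"
  obtains node \<omega> where "node ` (SIGMA r:{..k}. {..k - r}) \<subseteq> cbox a b"
    and "\<And>f. f \<in> polyfuns2 k \<Longrightarrow> integral S (\<lambda>z. f (Re z) (Im z)) =
      (\<Sum>t\<in>(SIGMA r:{..k}. {..k - r}). \<omega> t * f (Re (node t)) (Im (node t)))"
proof -
  have "S \<subseteq> box a b"
    using interior_mono[OF assms(2)] interior_open[OF assms(1)] by simp
  with assms(3) have "Re a < Re b" "Im a < Im b"
    by (auto simp: in_box_complex_iff)
  define x where "x r = Re b - (Re b - Re a) / 2 ^ r" for r :: nat
  define y where "y s = Im b - (Im b - Im a) / 2 ^ s" for s :: nat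
  obtain \<Phi> where \<Phi>_cont: "\<And>r s. continuous_on UNIV (\<Phi> r s)"
    and \<Phi>_interp: "\<And>f z. f \<in> polyfuns2 k \<Longrightarrow>
      f (Re z) (Im z) = (\<Sum>r\<le>k. \<Sum>s\<le>k - r. f (x r) (y s) * \<Phi> r s z)"
    using polyfuns2_interpolation[of x y k] dyadic_nodes(1)[OF \<open>Re a < Re b\<close>]
      dyadic_nodes(1)[OF \<open>Im a < Im b\<close>] unfolding x_def y_def by blast
  have \<Phi>_integrable: "\<Phi> r s integrable_on S" for r s
    using assms(1,2) bounded_cbox bounded_subset
    by (intro integrable_continuous_on_subset_cbox[OF continuous_on_subset[OF \<Phi>_cont]])
      (auto intro: fmeasurableD lmeasurable_open)
  define node where "node = (\<lambda>(r, s). Complex (x r) (y s))"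
  define \<omega> where "\<omega> = (\<lambda>(r, s). integral S (\<Phi> r s))"
  show ?thesis
  proof (rule that)
    show "node ` (SIGMA r:{..k}. {..k - r}) \<subseteq> cbox a b"
      using dyadic_nodes(2)[OF \<open>Re a < Re b\<close>] dyadic_nodes(2)[OF \<open>Im a < Im b\<close>]
      by (auto simp: node_def x_def y_def in_cbox_complex_iff)
  next
    fix f assume "f \<in> polyfuns2 k"
    have "integral S (\<lambda>z. f (Re z) (Im z))
        = integral S (\<lambda>z. \<Sum>r\<le>k. \<Sum>s\<le>k - r. f (x r) (y s) * \<Phi> r s z)"
      using \<Phi>_interp[OF \<open>f \<in> polyfuns2 k\<close>] by simp
    also have "\<dots> = (\<Sum>r\<le>k. \<Sum>s\<le>k - r. integral S (\<lambda>z. f (x r) (y s) * \<Phi> r s z))"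
      using \<Phi>_integrable by (simp add: integral_sum integrable_sum integrable_on_mult_right)
    also have "\<dots> = (\<Sum>t\<in>(SIGMA r:{..k}. {..k - r}). \<omega> t * f (Re (node t)) (Im (node t)))"
      by (simp add: node_def \<omega>_def sum.Sigma mult.commute case_prod_beta)
    finally show "integral S (\<lambda>z. f (Re z) (Im z)) =
      (\<Sum>t\<in>(SIGMA r:{..k}. {..k - r}). \<omega> t * f (Re (node t)) (Im (node t)))" .
  qed
qed

lemma polyfuns2_cubature:
  fixes S :: "complex set"
  assumes "open S" "S \<subseteq> cbox a b" "cbox a b \<noteq> {}" "(k + 1) * (k + 2) \<le> 2 * n"
  shows "\<exists>pts wts. (\<forall>l<n. pts l \<in> cbox a b) \<and>
    (\<forall>f\<in>polyfuns2 k. integral S (\<lambda>z. f (Re z) (Im z)) =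
      (\<Sum>l<n. wts l * f (Re (pts l)) (Im (pts l))))"
proof (cases "S = {}")
  case True
  obtain p where "p \<in> cbox a b" using assms(3) by blast
  with True show ?thesis
    by (intro exI[of _ "\<lambda>_. p"] exI[of _ "\<lambda>_. 0"]) auto
next
  case False
  define T where "T = (SIGMA r:{..k}. {..k - r})"
  obtain node \<omega> where node: "node ` T \<subseteq> cbox a b"
    and exact: "\<And>f. f \<in> polyfuns2 k \<Longrightarrow>
      integral S (\<lambda>z. f (Re z) (Im z)) = (\<Sum>t\<in>T. \<omega> t * f (Re (node t)) (Im (node t)))"
    using polyfuns2_grid_cubature[OF assms(1,2) False] unfolding T_def by blast
  have "card T \<le> n"
    using card_triangle[of k] assms(4) unfolding T_def by linarith
  moreover have "finite T" "T \<noteq> {}"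
    by (auto simp: T_def)
  ultimately obtain h v where h: "\<And>l. h l \<in> T"
    and padded: "\<And>g. (\<Sum>t\<in>T. \<omega> t * g t) = (\<Sum>l<n. v l * g (h l))"
    using sum_reindex_padded[of T n \<omega>] by blast
  have "integral S (\<lambda>z. f (Re z) (Im z)) = (\<Sum>l<n. v l * f (Re (node (h l))) (Im (node (h l))))"
    if "f \<in> polyfuns2 k" for f
    using exact[OF that] padded[of "\<lambda>t. f (Re (node t)) (Im (node t))"] by simp
  with h node show ?thesis
    by (intro exI[of _ "node \<circ> h"] exI[of _ v]) auto
qed

section \<open>Rational Bezier curves and their bounding box\<close>

lemma rbezier_denominator_pos:
  assumes "\<And>j. j \<le> m \<Longrightarrow> 0 < W j" "s \<in> {0..1}"
  shows "0 < (\<Sum>j\<le>m. W j * bernstein m j s)"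
proof -
  have B_nonneg: "0 \<le> bernstein m j s" for j
    using assms(2) by (simp add: bernstein_def)
  have "(\<Sum>j\<le>m. bernstein m j s) = 1"
    using binomial_ring[of s "1 - s" m] by (simp add: bernstein_def ac_simps)
  then obtain j where "j \<le> m" "bernstein m j s \<noteq> 0"
    by (metis (no_types, lifting) sum.neutral zero_neq_one atMost_iff)
  then show ?thesis
    using assms(1) B_nonneg
    by (intro sum_pos2[of "{..m}" j]) (auto simp: order_less_le intro!: mult_nonneg_nonneg)
qed

lemma rbezier_subset_convex:
  assumes "convex C" "\<And>j. j \<le> m \<Longrightarrow> Complex (X j) (Y j) \<in> C" "\<And>j. j \<le> m \<Longrightarrow> 0 < W j"
  shows "path_image (rbezier m X Y W) \<subseteq> C"
proof
  fix z assume "z \<in> path_image (rbezier m X Y W)"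
  then obtain s where s: "s \<in> {0..1}" and z: "z = rbezier m X Y W s"
    unfolding path_image_def by auto
  define D where "D = (\<Sum>j\<le>m. W j * bernstein m j s)"
  define a where "a j = W j * bernstein m j s / D" for j
  have "0 < D"
    unfolding D_def using rbezier_denominator_pos[OF assms(3) s] .
  have "z = (\<Sum>j\<le>m. a j *\<^sub>R Complex (X j) (Y j))"
    using \<open>0 < D\<close> unfolding z rbezier_def Let_def D_def[symmetric] a_def
    by (simp add: complex_eq_iff sum_divide_distrib ac_simps)
  moreover have "0 \<le> a j" if "j \<le> m" for j
    using s \<open>0 < D\<close> assms(3)[OF that] by (simp add: a_def bernstein_def)
  moreover have "sum a {..m} = 1"
    using \<open>0 < D\<close> by (simp add: a_def D_def flip: sum_divide_distrib)
  ultimately show "z \<in> C"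
    using assms(1,2) by (auto intro!: convex_sum)
qed

lemma bounded_subset_convex_if_frontier_subset:
  fixes S C :: "'a::euclidean_space set"
  assumes "bounded S" "convex C" "closed C" "frontier S \<subseteq> C"
  shows "S \<subseteq> C"
proof
  fix z assume "z \<in> S"
  show "z \<in> C"
  proof (rule ccontr)
    assume "z \<notin> C"
    then obtain a b where "a \<bullet> z < b" and C_above: "\<forall>x\<in>C. b < a \<bullet> x"
      using separating_hyperplane_closed_point[OF assms(2,3)] by blast
    define H where "H = {x. a \<bullet> x < b}"
    have "\<not> bounded H"
    proof
      assume "bounded H"
      then obtain B where B: "\<And>x. x \<in> H \<Longrightarrow> norm x \<le> B"
        by (auto simp: bounded_iff)
      have "z \<in> H" using \<open>a \<bullet> z < b\<close> by (simp add: H_def)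
      show False
      proof (cases "a = 0")
        case True
        then have "H = UNIV" using \<open>a \<bullet> z < b\<close> by (auto simp: H_def)
        with \<open>bounded H\<close> show False by simp
      next
        case False
        define t where "t = (B + norm z + 1) / norm a"
        have "0 \<le> B + norm z"
          using B[OF \<open>z \<in> H\<close>] norm_ge_zero[of z] by linarith
        then have "0 \<le> t" by (simp add: t_def)
        then have "0 \<le> t * (a \<bullet> a)" by simp
        then have "z - t *\<^sub>R a \<in> H"
          using \<open>a \<bullet> z < b\<close> by (simp add: H_def inner_diff_right)
        moreover have "norm (t *\<^sub>R a) = B + norm z + 1"
          using False \<open>0 \<le> B + norm z\<close> by (simp add: t_def)
        moreover have "norm (t *\<^sub>R a) \<le> norm z + norm (z - t *\<^sub>R a)"
          using norm_triangle_ineq4[of z "z - t *\<^sub>R a"] by simp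
        ultimately show False
          using B by fastforce
      qed
    qed
    then have "H - S \<noteq> {}"
      using assms(1) bounded_subset by blast
    then have "H \<inter> frontier S \<noteq> {}"
      using \<open>z \<in> S\<close> \<open>a \<bullet> z < b\<close>
      by (intro connected_Int_frontier convex_connected) (auto simp: H_def convex_halfspace_lt)
    then show False
      using assms(4) C_above unfolding H_def by force
  qed
qed

lemma node_count_bound:
  fixes m :: "nat \<Rightarrow> nat"
  assumes "i < nc" "1 \<le> m i"
  shows "(k + 1) * (k + 2) \<le> 2 * (nat \<lceil>real (k + 1) / 2\<rceil> * (\<Sum>i<nc. m i * (k + 3) + 1))"
proof -
  define C where "C = nat \<lceil>real (k + 1) / 2\<rceil>"
  have "real (k + 1) / 2 \<le> real C"
    unfolding C_def using le_of_int_ceiling[of "real (k + 1) / 2"] by simp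
  then have "real (k + 1) \<le> 2 * real C"
    by (simp add: field_simps)
  then have C: "k + 1 \<le> 2 * C"
    by linarith
  have "k + 2 \<le> m i * (k + 3) + 1"
    using assms(2) by (cases "m i") auto
  also have "\<dots> \<le> (\<Sum>i<nc. m i * (k + 3) + 1)"
    using assms(1) by (intro member_le_sum) auto
  finally show ?thesis
    using C unfolding C_def by (metis mult.assoc mult_le_mono)
qed

lemma control_points_in_bounding_box:
  fixes m :: "nat \<Rightarrow> nat" and X Y :: "nat \<Rightarrow> nat \<Rightarrow> real"
  assumes "i < nc" "j \<le> m i"
  shows "Complex (X i j) (Y i j) \<in> cbox
    (Complex (Min {X i j | i j. i < nc \<and> j \<le> m i}) (Min {Y i j | i j. i < nc \<and> j \<le> m i}))
    (Complex (Max {X i j | i j. i < nc \<and> j \<le> m i}) (Max {Y i j | i j. i < nc \<and> j \<le> m i}))"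
proof -
  have "finite {F i j | i j. i < nc \<and> j \<le> m i}" for F :: "nat \<Rightarrow> nat \<Rightarrow> real"
  proof -
    have "{F i j | i j. i < nc \<and> j \<le> m i} = (\<lambda>(i, j). F i j) ` (SIGMA i:{..<nc}. {..m i})"
      by auto
    then show ?thesis by simp
  qed
  then show ?thesis
    using assms by (auto simp: in_cbox_complex_iff intro!: Min_le Max_ge)
qed

theorem mainTheorem1:
  fixes \<Omega> :: "complex set"
    and nc :: nat
    and m :: "nat \<Rightarrow> nat"
    and X Y W :: "nat \<Rightarrow> nat \<Rightarrow> real"
    and k :: nat
  assumes deg: "\<And>i. i < nc \<Longrightarrow> m i \<ge> 1"
    and wpos: "\<And>i j. i < nc \<Longrightarrow> j \<le> m i \<Longrightarrow> W i j > 0"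
    and open_\<Omega>: "open \<Omega>"
    and bounded_\<Omega>: "bounded \<Omega>"
    and boundary: "frontier \<Omega> = (\<Union>i<nc. path_image (rbezier (m i) (X i) (Y i) (W i)))"
    and loops: "\<exists>\<sigma>. \<sigma> permutes {..<nc} \<and>
                  (\<forall>i<nc. pathfinish (rbezier (m i) (X i) (Y i) (W i)) =
                           pathstart (rbezier (m (\<sigma> i)) (X (\<sigma> i)) (Y (\<sigma> i)) (W (\<sigma> i))))"
    and positive_orientation: "\<And>z. z \<notin> frontier \<Omega> \<Longrightarrow>
           (\<Sum>i<nc. winding_number (rbezier (m i) (X i) (Y i) (W i)) z) =
           (if z \<in> \<Omega> then 1 else 0)"
  shows "\<exists>pts :: nat \<Rightarrow> complex. \<exists>wts :: nat \<Rightarrow> real.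
     (let nq = nat \<lceil>real (k + 1) / 2\<rceil> * (\<Sum>i<nc. m i * (k + 3) + 1);
          xmin = Min {X i j | i j. i < nc \<and> j \<le> m i};
          xmax = Max {X i j | i j. i < nc \<and> j \<le> m i};
          ymin = Min {Y i j | i j. i < nc \<and> j \<le> m i};
          ymax = Max {Y i j | i j. i < nc \<and> j \<le> m i}
      in (\<forall>l<nq. Re (pts l) \<in> {xmin..xmax} \<and> Im (pts l) \<in> {ymin..ymax}) \<and>
         (\<forall>c :: nat \<Rightarrow> nat \<Rightarrow> real.
            integral \<Omega> (\<lambda>z. poly2 k c (Re z) (Im z)) =
            (\<Sum>l<nq. wts l * poly2 k c (Re (pts l)) (Im (pts l)))))"
proof -
  let ?box = "cbox
    (Complex (Min {X i j | i j. i < nc \<and> j \<le> m i}) (Min {Y i j | i j. i < nc \<and> j \<le> m i}))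
    (Complex (Max {X i j | i j. i < nc \<and> j \<le> m i}) (Max {Y i j | i j. i < nc \<and> j \<le> m i}))"
  let ?nq = "nat \<lceil>real (k + 1) / 2\<rceil> * (\<Sum>i<nc. m i * (k + 3) + 1)"
  show ?thesis
  proof (cases "nc = 0")
    case True
    then have "\<Omega> = {}"
      using boundary bounded_\<Omega> frontier_eq_empty not_bounded_UNIV by (metis lessThan_0 UN_empty)
    with True show ?thesis by (simp add: Let_def)
  next
    case False
    have "path_image (rbezier (m i) (X i) (Y i) (W i)) \<subseteq> ?box" if "i < nc" for i
      using that control_points_in_bounding_box wpos by (intro rbezier_subset_convex convex_box(1))
    then have "frontier \<Omega> \<subseteq> ?box"
      using boundary by auto
    then have "\<Omega> \<subseteq> ?box"
      by (rule bounded_subset_convex_if_frontier_subset[OF bounded_\<Omega> convex_box(1) closed_cbox])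
    moreover have "?box \<noteq> {}"
      using control_points_in_bounding_box[of 0 nc 0 m] False by auto
    moreover have "(k + 1) * (k + 2) \<le> 2 * ?nq"
      using node_count_bound[of 0 nc m] deg False by simp
    ultimately obtain pts wts where "\<forall>l<?nq. pts l \<in> ?box"
      and "\<forall>f\<in>polyfuns2 k. integral \<Omega> (\<lambda>z. f (Re z) (Im z)) =
        (\<Sum>l<?nq. wts l * f (Re (pts l)) (Im (pts l)))"
      using polyfuns2_cubature[OF open_\<Omega>] by blast
    moreover have "poly2 k c \<in> polyfuns2 k" for c
      unfolding polyfuns2_def by blast
    ultimately show ?thesis
      unfolding Let_def by (intro exI[of _ pts] exI[of _ wts]) (auto simp: in_cbox_complex_iff)
  qed
qed

end
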